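(* Let $k\in\mathbb Z$, $\mathbb N_k=\{l\in\mathbb Z:l\le k\}$, and $\xi$ a random variable with $\mathbb P(\xi=l)=p_l$, $l\in\mathbb N_k$, $p_l\ge0$, $\sum_lp_l=1$, $p_k\in(0,1)$. Let $r_i=\sum_{j\le k-i}p_j$ for integers $i\ge1$. Fix $N\ge1$, let $Z$ be the Markov chain on $\Omega_k$ described in the context, $\bar\nu_N$ its invariant distribution and $\phi(m)=\sup\{i\in\mathbb N_k:m_i>0\}$. Then for each $i\ge2$, $$\bar\nu_N(\phi\le k-i)\le\Big(\frac{r_i}{r_1}\Big)^N\bar\nu_N(\phi\le k-1).$$
   Context: $\Omega_k=\{m\in\{0,\dots,N\}^{\mathbb N_k}:\sum_{i\in\mathbb N_k}m_i=N\}$. The chain $Z$ on $\Omega_k$ has the kernel: from state $m$, take any $x\in\mathbb Z^N$ with exactly $m_l$ coordinates equal to $l$ for each $l\in\mathbb N_k$, let $\{\xi_{i,j}:1\le i,j\le N\}$ be fresh i.i.d. copies of $\xi$, and let the next state be $\big(\#\{i\le N:\max_j(x_j+\xi_{i,j})=\phi(m)+l\}\big)_{l\in\mathbb N_k}$. (Equivalently, $Z_l(t)=\#\{j:X_j(t)=\max_iX_i(t-1)+l\}$ for the particle system $X_i(t+1)=\max_j\{X_j(t)+\xi_{i,j}(t+1)\}$.) $\bar\nu_N$ is its unique invariant probability distribution. *)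

theory Defs
  imports "HOL-Probability.Probability"
begin

text \<open>States: configurations m indexed by N_k = {l. l \<le> k}; extended by 0 above k.\<close>
definition Omega :: "int \<Rightarrow> nat \<Rightarrow> (int \<Rightarrow> nat) set" where
  "Omega k N = {m. (\<forall>l. m l \<le> N) \<and> (\<forall>l. l > k \<longrightarrow> m l = 0)
                  \<and> finite {l. m l \<noteq> 0} \<and> (\<Sum>l\<in>{l. m l \<noteq> 0}. m l) = N}"

definition phi :: "int \<Rightarrow> (int \<Rightarrow> nat) \<Rightarrow> int" where
  "phi k m = Max {l. l \<le> k \<and> m l > 0}"

text \<open>A particle configuration x in Z^N (coordinates 0..N-1) with exactly m_l coordinates equal to l.\<close>
definition config :: "nat \<Rightarrow> (int \<Rightarrow> nat) \<Rightarrow> nat \<Rightarrow> int" where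
  "config N m = (SOME x. \<forall>l. card {j\<in>{0..<N}. x j = l} = m l)"

definition Z_step :: "int pmf \<Rightarrow> int \<Rightarrow> nat \<Rightarrow> (int \<Rightarrow> nat) \<Rightarrow> (int \<Rightarrow> nat) pmf" where
  "Z_step xi k N m =
     map_pmf (\<lambda>e. \<lambda>l. if l \<le> k then
                card {i\<in>{0..<N}. Max ((\<lambda>j. config N m j + e (i, j)) ` {0..<N}) = phi k m + l}
              else 0)
       (Pi_pmf ({0..<N} \<times> {0..<N}) 0 (\<lambda>_. xi))"

definition invariant_Z :: "int pmf \<Rightarrow> int \<Rightarrow> nat \<Rightarrow> (int \<Rightarrow> nat) pmf \<Rightarrow> bool" where
  "invariant_Z xi k N \<nu> \<longleftrightarrow> set_pmf \<nu> \<subseteq> Omega k N \<and> bind_pmf \<nu> (Z_step xi k N) = \<nu>"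

definition r :: "int pmf \<Rightarrow> int \<Rightarrow> int \<Rightarrow> real" where
  "r xi k i = measure_pmf.prob xi {..k - i}"

end

theory Submission imports Defs begin

text \<open>
  Started from a configuration \<open>x\<close> with top \<open>\<phi>(m)\<close>, the next state has \<open>\<phi> \<le> t\<close> iff
  \<open>x\<^sub>b + \<xi>\<^sub>a\<^sub>,\<^sub>b \<le> \<phi>(m) + t\<close> for all \<open>N\<^sup>2\<close> independent increments, so its probability is
  \<open>(\<Prod>\<^sub>b P(\<xi> \<le> \<phi>(m) + t - x\<^sub>b))\<^sup>N\<close>. Each factor grows with \<open>t\<close>, and for a particle \<open>b\<close>
  sitting at the top the factors for \<open>t = k - i\<close> and \<open>t = k - 1\<close> are exactly \<open>r\<^sub>i\<close> and \<open>r\<^sub>1\<close>.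
  Hence one step of the chain satisfies the claimed inequality from every state, and
  stationarity of \<open>\<nu>\<close> transfers it to \<open>\<nu>\<close>.
\<close>

lemma config_exists:
  assumes "m \<in> Omega k N"
  shows "\<exists>x::nat \<Rightarrow> int. \<forall>l. card {j\<in>{0..<N}. x j = l} = m l"
proof -
  from assms have fin: "finite {l. m l \<noteq> 0}" and sum_m: "(\<Sum>l\<in>{l. m l \<noteq> 0}. m l) = N"
    by (auto simp: Omega_def)
  define M where "M = Abs_multiset m"
  have count_M: "count M = m"
    using fin by (simp add: M_def count_Abs_multiset)
  obtain xs where xs: "mset xs = M"
    using ex_mset by blast
  have "size M = N"
    using sum_m count_M by (simp add: size_multiset_overloaded_eq set_mset_def)
  then have len: "length xs = N"
    using xs by (metis size_mset)
  have "card {j\<in>{0..<N}. xs ! j = l} = m l" for l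
  proof -
    have "card {j\<in>{0..<N}. xs ! j = l} = length (filter ((=) l) xs)"
      using len by (simp add: length_filter_conv_card atLeast0LessThan conj_commute eq_commute)
    also have "\<dots> = m l"
      using xs count_M by (metis count_mset count_list_eq_length_filter)
    finally show ?thesis .
  qed
  then show ?thesis
    by blast
qed

lemma config_count:
  assumes "m \<in> Omega k N"
  shows "card {j\<in>{0..<N}. config N m j = l} = m l"
  using someI_ex[OF config_exists[OF assms]] unfolding config_def by blast

lemma count_phi_pos:
  assumes "m \<in> Omega k N" and "N \<ge> 1"
  shows "m (phi k m) > 0"
proof -
  from assms(1) have fin: "finite {l. m l \<noteq> 0}" and sum_m: "(\<Sum>l\<in>{l. m l \<noteq> 0}. m l) = N"
    and above_k: "\<And>l. l > k \<Longrightarrow> m l = 0"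
    by (auto simp: Omega_def)
  have "finite {l. l \<le> k \<and> m l > 0}"
    by (rule finite_subset[OF _ fin]) auto
  moreover obtain l0 where "m l0 \<noteq> 0"
    using sum_m assms(2) by (metis (no_types) mem_Collect_eq not_one_le_zero sum.neutral)
  then have "{l. l \<le> k \<and> m l > 0} \<noteq> {}"
    using above_k by (metis (mono_tags) empty_iff gr0I mem_Collect_eq not_le)
  ultimately have "phi k m \<in> {l. l \<le> k \<and> m l > 0}"
    unfolding phi_def by (rule Max_in)
  then show ?thesis
    by simp
qed

lemma config_le_phi:
  assumes "m \<in> Omega k N" and "j < N"
  shows "config N m j \<le> phi k m"
proof -
  from assms(1) have fin: "finite {l. m l \<noteq> 0}" and above_k: "\<And>l. l > k \<Longrightarrow> m l = 0"
    by (auto simp: Omega_def)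
  have "card {j'\<in>{0..<N}. config N m j' = config N m j} > 0"
    using assms(2) by (subst card_gt_0_iff) auto
  then have "m (config N m j) > 0"
    using config_count[OF assms(1)] by simp
  then have "config N m j \<in> {l. l \<le> k \<and> m l > 0}"
    using above_k by (metis gr_implies_not0 mem_Collect_eq not_le)
  moreover have "finite {l. l \<le> k \<and> m l > 0}"
    by (rule finite_subset[OF _ fin]) auto
  ultimately show ?thesis
    unfolding phi_def by simp
qed

lemma config_attains_phi:
  assumes "m \<in> Omega k N" and "N \<ge> 1"
  obtains j where "j < N" and "config N m j = phi k m"
proof -
  have "card {j\<in>{0..<N}. config N m j = phi k m} > 0"
    using config_count[OF assms(1)] count_phi_pos[OF assms] by simp
  then show ?thesis
    using that by (auto simp: card_gt_0_iff)
qed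

text \<open>The next state of the chain is the vector of level counts of the new positions \<open>M\<close>,
  measured from \<open>c = \<phi>(m)\<close>; its top level is the highest new position.\<close>

lemma phi_level_counts:
  fixes M :: "nat \<Rightarrow> int"
  assumes "N \<ge> 1" and "\<And>a. a < N \<Longrightarrow> M a \<le> c + k"
  shows "phi k (\<lambda>l. if l \<le> k then card {a\<in>{0..<N}. M a = c + l} else 0)
           = Max ((\<lambda>a. M a - c) ` {0..<N})"
proof -
  have "{l. l \<le> k \<and> (if l \<le> k then card {a\<in>{0..<N}. M a = c + l} else 0) > 0}
          = (\<lambda>a. M a - c) ` {0..<N}"
  proof (intro set_eqI iffI)
    fix l
    assume "l \<in> {l. l \<le> k \<and> (if l \<le> k then card {a\<in>{0..<N}. M a = c + l} else 0) > 0}"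
    then obtain a where "a < N" "M a = c + l"
      by (auto simp: card_gt_0_iff)
    then show "l \<in> (\<lambda>a. M a - c) ` {0..<N}"
      by (auto intro!: image_eqI[of _ _ a])
  next
    fix l
    assume "l \<in> (\<lambda>a. M a - c) ` {0..<N}"
    then obtain a where a: "a < N" "l = M a - c"
      by auto
    then have "a \<in> {a\<in>{0..<N}. M a = c + l}" and "l \<le> k"
      using assms(2)[OF a(1)] by auto
    then show "l \<in> {l. l \<le> k \<and> (if l \<le> k then card {a\<in>{0..<N}. M a = c + l} else 0) > 0}"
      by (auto simp: card_gt_0_iff)
  qed
  then show ?thesis
    unfolding phi_def by simp
qed

lemma prob_Z_step_phi_le:
  assumes m: "m \<in> Omega k N" and N: "N \<ge> 1" and supp: "set_pmf xi \<subseteq> {..k}"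
  shows "measure_pmf.prob (Z_step xi k N m) {m'. phi k m' \<le> t}
           = (\<Prod>b\<in>{0..<N}. measure_pmf.prob xi {..phi k m + t - config N m b}) ^ N"
proof -
  define D where "D = {0..<N} \<times> {0..<N}"
  define P where "P = Pi_pmf D 0 (\<lambda>_. xi)"
  define x where "x = config N m"
  define c where "c = phi k m"
  define M where "M = (\<lambda>e (a::nat). Max ((\<lambda>j. x j + e (a, j)) ` {0..<N}))"
  define F where "F = (\<lambda>e l. if l \<le> k then card {a\<in>{0..<N}. M e a = c + l} else 0)"
  define B where "B = (\<lambda>(a::nat, b::nat). {..c + t - x b})"
  have finD: "finite D"
    by (simp add: D_def)
  have event: "phi k (F e) \<le> t \<longleftrightarrow> e \<in> Pi D B" if "e \<in> set_pmf P" for e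
  proof -
    have e_le: "e (a, b) \<le> k" if "a < N" "b < N" for a b
      using \<open>e \<in> set_pmf P\<close> supp that
      unfolding P_def set_Pi_pmf[OF finD] by (auto simp: PiE_dflt_def D_def)
    have Max_le: "M e a \<le> d \<longleftrightarrow> (\<forall>b<N. x b + e (a, b) \<le> d)" for a d
      unfolding M_def using N by (subst Max_le_iff) auto
    have "M e a \<le> c + k" if "a < N" for a
      using Max_le config_le_phi[OF m] e_le[OF that] by (fastforce simp: x_def c_def intro: add_mono)
    then have "phi k (F e) = Max ((\<lambda>a. M e a - c) ` {0..<N})"
      unfolding F_def using phi_level_counts[OF N] by blast
    also have "\<dots> \<le> t \<longleftrightarrow> (\<forall>a<N. M e a \<le> c + t)"
      using N by (subst Max_le_iff) (auto simp: diff_le_eq add.commute)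
    also have "\<dots> \<longleftrightarrow> e \<in> Pi D B"
      by (auto simp: Max_le D_def B_def Pi_def algebra_simps)
    finally show ?thesis .
  qed
  have "measure_pmf.prob (Z_step xi k N m) {m'. phi k m' \<le> t} = measure_pmf.prob P {e. phi k (F e) \<le> t}"
    unfolding Z_step_def F_def M_def P_def D_def x_def c_def by (simp add: vimage_def)
  also have "\<dots> = measure_pmf.prob P (Pi D B)"
    using event by (intro measure_prob_cong_0) (auto simp: set_pmf_iff)
  also have "\<dots> = (\<Prod>(a, b)\<in>D. measure_pmf.prob xi {..c + t - x b})"
    unfolding P_def by (subst measure_Pi_pmf_Pi[OF finD]) (simp add: B_def case_prod_unfold)
  also have "\<dots> = (\<Prod>a\<in>{0..<N}. \<Prod>b\<in>{0..<N}. measure_pmf.prob xi {..c + t - x b})"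
    unfolding D_def by (rule prod.cartesian_product[symmetric])
  finally show ?thesis
    by (simp add: x_def c_def)
qed

lemma prod_le_ratio_mult_prod:
  fixes f g :: "'a \<Rightarrow> real"
  assumes "finite A" and "b \<in> A" and "g b > 0"
    and "\<And>a. a \<in> A \<Longrightarrow> 0 \<le> f a" and "\<And>a. a \<in> A \<Longrightarrow> f a \<le> g a"
  shows "(\<Prod>a\<in>A. f a) \<le> f b / g b * (\<Prod>a\<in>A. g a)"
proof -
  have "(\<Prod>a\<in>A. f a) = f b * (\<Prod>a\<in>A - {b}. f a)"
    using assms by (simp add: prod.remove)
  also have "\<dots> \<le> f b * (\<Prod>a\<in>A - {b}. g a)"
    using assms by (auto intro!: mult_left_mono prod_mono)
  also have "\<dots> = f b / g b * (g b * (\<Prod>a\<in>A - {b}. g a))"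
    using assms by simp
  also have "g b * (\<Prod>a\<in>A - {b}. g a) = (\<Prod>a\<in>A. g a)"
    using assms by (simp add: prod.remove)
  finally show ?thesis .
qed

lemma prob_Z_step_phi_le_ratio:
  assumes m: "m \<in> Omega k N" and N: "N \<ge> 1" and supp: "set_pmf xi \<subseteq> {..k}"
    and "s \<le> t" and pos: "measure_pmf.prob xi {..t} > 0"
  shows "measure_pmf.prob (Z_step xi k N m) {m'. phi k m' \<le> s}
           \<le> (measure_pmf.prob xi {..s} / measure_pmf.prob xi {..t}) ^ N
              * measure_pmf.prob (Z_step xi k N m) {m'. phi k m' \<le> t}"
proof -
  define f where "f = (\<lambda>u b. measure_pmf.prob xi {..phi k m + u - config N m b})"
  obtain b where b: "b < N" "config N m b = phi k m"
    using config_attains_phi[OF m N] .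
  have "(\<Prod>b\<in>{0..<N}. f s b) \<le> f s b / f t b * (\<Prod>b\<in>{0..<N}. f t b)"
    using b pos \<open>s \<le> t\<close>
    by (intro prod_le_ratio_mult_prod) (auto simp: f_def intro!: measure_pmf.finite_measure_mono)
  then have "(\<Prod>b\<in>{0..<N}. f s b) ^ N \<le> (f s b / f t b * (\<Prod>b\<in>{0..<N}. f t b)) ^ N"
    by (intro power_mono) (auto simp: f_def intro: prod_nonneg)
  also have "\<dots> = (f s b / f t b) ^ N * (\<Prod>b\<in>{0..<N}. f t b) ^ N"
    by (rule power_mult_distrib)
  finally show ?thesis
    using b by (simp only: prob_Z_step_phi_le[OF m N supp] f_def) simp
qed

lemma stationary_prob_le:
  assumes stat: "bind_pmf \<nu> K = \<nu>" and "c \<ge> 0"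
    and step: "\<And>m. m \<in> set_pmf \<nu> \<Longrightarrow> measure_pmf.prob (K m) A \<le> c * measure_pmf.prob (K m) B"
  shows "measure_pmf.prob \<nu> A \<le> c * measure_pmf.prob \<nu> B"
proof -
  have "emeasure (measure_pmf \<nu>) A = (\<integral>\<^sup>+m. emeasure (K m) A \<partial>\<nu>)"
    by (subst (1) stat[symmetric]) simp
  also have "\<dots> \<le> (\<integral>\<^sup>+m. ennreal c * emeasure (K m) B \<partial>\<nu>)"
    using step \<open>c \<ge> 0\<close>
    by (intro nn_integral_mono_AE AE_pmfI)
       (simp add: measure_pmf.emeasure_eq_measure ennreal_mult[symmetric] ennreal_leI)
  also have "\<dots> = ennreal c * emeasure (measure_pmf \<nu>) B"
    by (subst (2) stat[symmetric]) (simp add: nn_integral_cmult)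
  finally show ?thesis
    using \<open>c \<ge> 0\<close> by (simp add: measure_pmf.emeasure_eq_measure ennreal_mult[symmetric])
qed

lemma r_1_pos:
  assumes "set_pmf xi \<subseteq> {..k}" and "pmf xi k < 1"
  shows "r xi k 1 > 0"
proof -
  have "measure_pmf.prob xi {..k - 1} + pmf xi k = measure_pmf.prob xi ({..k - 1} \<union> {k})"
    by (subst measure_pmf.finite_measure_Union) (auto simp: measure_pmf_single)
  also have "{..k - 1} \<union> {k} = {..k}"
    by auto
  also have "measure_pmf.prob xi {..k} = 1"
    using assms(1) by (subst measure_pmf.prob_eq_1) (auto simp: AE_measure_pmf_iff)
  finally show ?thesis
    using assms(2) by (simp add: r_def)
qed

theorem lemma6p2:
  fixes xi :: "int pmf" and k :: int and N :: nat and \<nu> :: "(int \<Rightarrow> nat) pmf" and i :: int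
  assumes supp: "set_pmf xi \<subseteq> {..k}"
    and pk_pos: "pmf xi k > 0" and pk_lt1: "pmf xi k < 1"
    and N: "N \<ge> 1"
    and inv: "invariant_Z xi k N \<nu>"
    and i: "i \<ge> 2"
  shows "measure_pmf.prob \<nu> {m. phi k m \<le> k - i}
           \<le> (r xi k i / r xi k 1) ^ N * measure_pmf.prob \<nu> {m. phi k m \<le> k - 1}"
proof (rule stationary_prob_le)
  show "bind_pmf \<nu> (Z_step xi k N) = \<nu>"
    using inv by (simp add: invariant_Z_def)
  show "(r xi k i / r xi k 1) ^ N \<ge> 0"
    by (simp add: r_def)
  fix m
  assume "m \<in> set_pmf \<nu>"
  then have "m \<in> Omega k N"
    using inv by (auto simp: invariant_Z_def)
  moreover have "measure_pmf.prob xi {..k - 1} > 0"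
    using r_1_pos[OF supp pk_lt1] by (simp add: r_def)
  ultimately show "measure_pmf.prob (Z_step xi k N m) {m. phi k m \<le> k - i}
      \<le> (r xi k i / r xi k 1) ^ N * measure_pmf.prob (Z_step xi k N m) {m. phi k m \<le> k - 1}"
    using prob_Z_step_phi_le_ratio[OF _ N supp, of m "k - i" "k - 1"] i by (simp add: r_def)
qed

end
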